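(* Let $f\in\mathbf C\{x\}[y]$ be a reduced distinguished polynomial of degree $n\ge2$, written $f=\prod_{i=1}^n(y-a_i)$ with $\sum_ia_i=0$, and let $h=f-\frac{y}{n}f'_y-\frac{x}{n\delta}f'_x$. Let $w\in\mathbf C\{x\}[y]$ be nonzero. Then the Euclidean division of $wh$ by $f$ yields $$wh=w_2f+\lambda(x)f'_y+\tilde w$$ with $w_2\in\mathbf C\{x\}[y]$, $\lambda(x)\in\mathbf C\{x\}$ and $\tilde w\in\mathcal F$ satisfying $\nu(\lambda(x))>n\delta\rho(w)+\delta$, $\rho(w_2)\ge\rho(w)+\rho(h)-1>\rho(w)$, and $\mathrm{val}(\tilde w)>n\delta\rho(w)+\delta$.
   Context: Distinguished: monic in $y$ with $f(0,y)=y^n$; the $a_i$ are pairwise distinct Puiseux series in $\overline K=\bigcup_{e\ge1}\mathbf C[[x^{1/e}]][1/x]$ with valuation $\nu$; $\delta=\inf_i\nu(a_i)>0$. For $w=\sum w_{k,l}x^ky^l\in\mathbf C\{x,y\}$ nonzero, $\rho(w)=\inf\{k/(n\delta)+l/n:w_{k,l}\ne0\}$ (and $\rho(\lambda(x))=\nu(\lambda)/(n\delta)$ for $\lambda\in\mathbf C\{x\}$). $\mathcal F$ is the $\mathbf C((x))$-space of polynomials in $y$ of degree $<n-1$. With $\varepsilon_i=\prod_{j\ne i}(y-a_j)$, for $w=\sum w_i\varepsilon_i$ of degree $<n$, $\mathrm{val}(w)=\inf_i\nu(w_i)$. The Euclidean division gives $wh=w_2f+R$ with $\deg_yR<n$,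 and $R$ is decomposed as $\lambda(x)f'_y+\tilde w$ according to $\mathcal E=\mathcal F\oplus\mathbf C((x))f'_y$. *)

theory Defs
  imports "HOL-Analysis.Analysis" "HOL-Computational_Algebra.Formal_Laurent_Series"
    "HOL-Computational_Algebra.Squarefree"
begin

text \<open>The variable x is the fps/fls variable; polynomials in y are
 elements of type poly over (complex fps) for C{x}[y], over (complex fls) for C((x))[y].
 Puiseux series with a common ramification index e are encoded as Laurent series in
 t = x^(1/e); the embedding C((x)) into C((t)) sends x to t^e.\<close>

definition conv_fps :: "complex fps \<Rightarrow> bool" where
  "conv_fps c \<longleftrightarrow> fps_conv_radius c > 0"

definition conv_poly :: "complex fps poly \<Rightarrow> bool" where
  "conv_poly p \<longleftrightarrow> (\<forall>i. conv_fps (coeff p i))"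

definition fls_ram :: "nat \<Rightarrow> complex fls \<Rightarrow> complex fls" where
  "fls_ram e c = Abs_fls (\<lambda>k. if int e dvd k then fls_nth c (k div int e) else 0)"

definition emb_fls_poly :: "nat \<Rightarrow> complex fls poly \<Rightarrow> complex fls poly" where
  "emb_fls_poly e p = map_poly (fls_ram e) p"

definition fls_poly :: "complex fps poly \<Rightarrow> complex fls poly" where
  "fls_poly p = map_poly fps_to_fls p"

definition nu_pui :: "nat \<Rightarrow> complex fls \<Rightarrow> ereal" where
  "nu_pui e c = (if c = 0 then \<infinity> else ereal (real_of_int (fls_subdegree c) / real e))"

definition nu_fps :: "complex fps \<Rightarrow> ereal" where
  "nu_fps c = (if c = 0 then \<infinity> else ereal (real (subdegree c)))"

definition delta :: "nat \<Rightarrow> nat \<Rightarrow> (nat \<Rightarrow> complex fls) \<Rightarrow> real" where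
  "delta n e a = real_of_ereal (INF i\<in>{..<n}. nu_pui e (a i))"

definition rho :: "nat \<Rightarrow> real \<Rightarrow> complex fps poly \<Rightarrow> ereal" where
  "rho n d w = Inf {ereal (real k / (real n * d) + real l / real n) | k l. coeff w l $ k \<noteq> 0}"

definition eps :: "nat \<Rightarrow> (nat \<Rightarrow> complex fls) \<Rightarrow> nat \<Rightarrow> complex fls poly" where
  "eps n a i = (\<Prod>j\<in>{..<n} - {i}. [:- a j, 1:])"

definition eps_coords :: "nat \<Rightarrow> (nat \<Rightarrow> complex fls) \<Rightarrow> complex fls poly \<Rightarrow> nat \<Rightarrow> complex fls" where
  "eps_coords n a w = (THE c. (\<forall>i\<ge>n. c i = 0) \<and> w = (\<Sum>i<n. smult (c i) (eps n a i)))"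

definition val :: "nat \<Rightarrow> nat \<Rightarrow> (nat \<Rightarrow> complex fls) \<Rightarrow> complex fls poly \<Rightarrow> ereal" where
  "val n e a w = (INF i\<in>{..<n}. nu_pui e (eps_coords n a (emb_fls_poly e w) i))"

definition hpoly :: "nat \<Rightarrow> real \<Rightarrow> complex fps poly \<Rightarrow> complex fps poly" where
  "hpoly n d f = f - smult (fps_const (1 / of_nat n)) ([:0, 1:] * pderiv f)
       - smult (fps_const (1 / (of_nat n * of_real d))) (map_poly (\<lambda>c. fps_X * fps_deriv c) f)"

end

theory Submission
  imports Defs
begin

text \<open>
  Substituting \<open>x = t\<^sup>e\<close> splits \<open>f\<close> as \<open>\<Prod>(y - a\<^sub>i)\<close> over \<open>\<complex>((t))\<close>, and
  \<open>\<delta> = m/e\<close> with \<open>m\<close> the least \<open>t\<close>-order of a root. Give \<open>x\<^sup>k y\<^sup>l\<close> the weight \<open>e k + l m\<close>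
  (\<open>n m\<close> times its contribution to \<open>\<rho>\<close>). Then \<open>f\<close> has weight \<open>\<ge> n m\<close>, and the Euler
  operator defining \<open>h\<close> kills the part of weight exactly \<open>n m\<close>, so \<open>\<rho>(h) > 1\<close>.

  For the quotient, a monomial of \<open>w\<^sub>2\<close> of least weight and, among those, largest \<open>y\<close>-degree
  reappears, shifted by \<open>y\<^sup>n\<close>, in \<open>w\<^sub>2 f\<close> and hence in \<open>w h\<close>; this gives
  \<open>\<rho>(w\<^sub>2) + 1 \<ge> \<rho>(w h) \<ge> \<rho>(w) + \<rho>(h)\<close>.

  For the remainder, the Euler identity expresses \<open>h\<close> in the basis \<open>\<epsilon>\<^sub>i\<close> with coefficients
  \<open>(t a\<^sub>i' - m a\<^sub>i)/(n m)\<close> of order \<open>\<ge> m + 1\<close>. Modulo \<open>\<Prod>(y - a\<^sub>i)\<close>, multiplying by \<open>w\<close>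
  multiplies the \<open>i\<close>-th coordinate by \<open>w(a\<^sub>i)\<close>, of order at least the least weight of \<open>w\<close>.
  Since \<open>f'\<^sub>y = \<Sum>\<epsilon>\<^sub>i\<close>, both \<open>\<lambda>\<close>, read off the coefficient of \<open>y\<^sup>n\<^sup>-\<^sup>1\<close> in the
  remainder \<open>R\<close>, and the coordinates of \<open>R - \<lambda> f'\<^sub>y\<close> inherit this order, which exceeds
  \<open>n \<delta> \<rho>(w) + \<delta>\<close> by \<open>1/e\<close>.
\<close>

unbundle Formal_Laurent_Series.fps_syntax

section \<open>Convergent power series and Euclidean division\<close>

lemma conv_fps_0 [simp]: "conv_fps 0"
  by (simp add: conv_fps_def)

lemma conv_fps_add: "conv_fps a \<Longrightarrow> conv_fps b \<Longrightarrow> conv_fps (a + b)"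
  unfolding conv_fps_def using fps_conv_radius_add[of a b] by (auto simp: min_def split: if_splits)

lemma conv_fps_diff: "conv_fps a \<Longrightarrow> conv_fps b \<Longrightarrow> conv_fps (a - b)"
  unfolding conv_fps_def using fps_conv_radius_diff[of a b] by (auto simp: min_def split: if_splits)

lemma conv_fps_mult: "conv_fps a \<Longrightarrow> conv_fps b \<Longrightarrow> conv_fps (a * b)"
  unfolding conv_fps_def using fps_conv_radius_mult[of a b] by (auto simp: min_def split: if_splits)

lemma conv_fps_deriv: "conv_fps a \<Longrightarrow> conv_fps (fps_deriv a)"
  unfolding conv_fps_def using fps_conv_radius_deriv[of a] by auto

lemma conv_fps_1 [simp]: "conv_fps 1"
  by (simp add: conv_fps_def)

lemma conv_fps_const [simp]: "conv_fps (fps_const c)"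
  by (simp add: conv_fps_def)

lemma conv_fps_of_nat [simp]: "conv_fps (of_nat k)"
  by (metis conv_fps_const fps_of_nat)

lemma conv_fps_X [simp]: "conv_fps fps_X"
  by (simp add: conv_fps_def)

lemma conv_fps_sum: "(\<And>i. i \<in> S \<Longrightarrow> conv_fps (g i)) \<Longrightarrow> conv_fps (\<Sum>i\<in>S. g i)"
  by (induction S rule: infinite_finite_induct) (auto intro: conv_fps_add)

lemma conv_poly_0 [simp]: "conv_poly 0"
  by (simp add: conv_poly_def)

lemma conv_poly_add [intro]: "conv_poly p \<Longrightarrow> conv_poly q \<Longrightarrow> conv_poly (p + q)"
  by (auto simp: conv_poly_def intro: conv_fps_add)

lemma conv_poly_diff [intro]: "conv_poly p \<Longrightarrow> conv_poly q \<Longrightarrow> conv_poly (p - q)"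
  by (auto simp: conv_poly_def intro: conv_fps_diff)

lemma conv_poly_mult [intro]: "conv_poly p \<Longrightarrow> conv_poly q \<Longrightarrow> conv_poly (p * q)"
  unfolding conv_poly_def coeff_mult by (auto intro!: conv_fps_sum conv_fps_mult)

lemma conv_poly_smult [intro]: "conv_fps c \<Longrightarrow> conv_poly p \<Longrightarrow> conv_poly (smult c p)"
  by (auto simp: conv_poly_def intro: conv_fps_mult)

lemma conv_poly_pderiv [intro]: "conv_poly p \<Longrightarrow> conv_poly (pderiv p)"
  by (auto simp: conv_poly_def coeff_pderiv intro!: conv_fps_mult conv_fps_add)

lemma conv_poly_hpoly: "conv_poly f \<Longrightarrow> conv_poly (hpoly n d f)"
  unfolding hpoly_def
  by (intro conv_poly_diff conv_poly_smult conv_poly_mult conv_poly_pderiv)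
     (auto simp: conv_poly_def coeff_map_poly coeff_pCons split: nat.split intro!: conv_fps_mult conv_fps_deriv)

lemma degree_cancel_lead_less:
  fixes p f :: "'a::idom poly"
  assumes "lead_coeff f = 1" "degree f \<le> degree p" "degree p > 0"
  shows "degree (p - monom (lead_coeff p) (degree p - degree f) * f) < degree p"
proof -
  let ?q = "monom (lead_coeff p) (degree p - degree f) * f"
  have "p \<noteq> 0" "f \<noteq> 0" using assms by auto
  then have dq: "degree ?q = degree p" using assms by (simp add: degree_mult_eq degree_monom_eq)
  have lq: "lead_coeff ?q = lead_coeff p"
    using \<open>p \<noteq> 0\<close> \<open>f \<noteq> 0\<close> assms by (simp add: lead_coeff_mult degree_monom_eq)
  have le: "degree (p - ?q) \<le> degree p" using dq by (simp add: degree_diff_le)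
  have top: "coeff (p - ?q) (degree p) = 0" using lq dq by simp
  show ?thesis
  proof (cases "p - ?q = 0")
    case False
    then have "degree (p - ?q) \<noteq> degree p" using top leading_coeff_neq_0 by metis
    with le show ?thesis by simp
  qed (use assms(3) in simp)
qed

lemma conv_poly_division:
  fixes f p :: "complex fps poly"
  assumes f: "conv_poly f" "lead_coeff f = 1" "degree f = n" "n > 0" and "conv_poly p"
  shows "\<exists>q r. conv_poly q \<and> conv_poly r \<and> p = q * f + r \<and> degree r < n"
  using \<open>conv_poly p\<close>
proof (induction "degree p" arbitrary: p rule: less_induct)
  case less
  show ?case
  proof (cases "degree p < n")
    case True
    then show ?thesis using less by (intro exI[of _ 0] exI[of _ p]) auto
  next
    case False
    define c where "c = monom (lead_coeff p) (degree p - degree f)"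
    have "conv_poly c" using less by (auto simp: c_def conv_poly_def)
    then have conv: "conv_poly (p - c * f)" using less f by (intro conv_poly_diff conv_poly_mult) auto
    have "degree (p - c * f) < degree p"
      unfolding c_def using False f by (intro degree_cancel_lead_less) auto
    from less.hyps[OF this conv] obtain q r
      where qr: "conv_poly q" "conv_poly r" "p - c * f = q * f + r" "degree r < n" by blast
    have "conv_poly (q + c)" using qr(1) \<open>conv_poly c\<close> by blast
    moreover have "p = (q + c) * f + r" using qr(3) by (simp add: algebra_simps)
    ultimately show ?thesis using qr(2,4) by blast
  qed
qed

section \<open>The substitution \<open>x = t\<^sup>e\<close>\<close>

definition fps_ram :: "nat \<Rightarrow> complex fps \<Rightarrow> complex fls" where
  "fps_ram e c = fps_to_fls (c oo fps_X ^ e)"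

lemma fps_ram_nth:
  assumes "e \<ge> 1"
  shows "fps_ram e c $$ k = (if 0 \<le> k \<and> int e dvd k then c $ nat (k div int e) else 0)"
proof (cases "k < 0")
  case False
  then obtain j where j: "k = int j" by (metis nat_0_le not_less)
  have "(c oo fps_X ^ e) $ j = (\<Sum>i\<in>{0..j}. if i = j div e \<and> e dvd j then c $ i else 0)"
    unfolding fps_compose_nth power_mult[symmetric]
    by (intro sum.cong refl) (use assms in \<open>auto simp: fps_X_power_iff\<close>)
  also have "\<dots> = (if e dvd j then c $ (j div e) else 0)"
    using assms by (auto simp: div_le_dividend)
  finally show ?thesis
    unfolding fps_ram_def j by (simp add: zdiv_int[symmetric])
qed (simp add: fps_ram_def)

lemma fps_ram_nth_mult: "e \<ge> 1 \<Longrightarrow> fps_ram e c $$ int (e * s) = c $ s"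
  by (simp add: fps_ram_nth)

lemma fps_ram_0 [simp]: "fps_ram e 0 = 0"
  by (simp add: fps_ram_def)

lemma fps_ram_1 [simp]: "fps_ram e 1 = 1"
  by (simp add: fps_ram_def)

lemma fps_ram_const [simp]: "fps_ram e (fps_const c) = fls_const c"
  by (intro fls_eqI) (simp add: fps_ram_def)

lemma fps_ram_add [simp]: "fps_ram e (a + b) = fps_ram e a + fps_ram e b"
  by (simp add: fps_ram_def fps_compose_add_distrib)

lemma fps_ram_mult [simp]: "e \<ge> 1 \<Longrightarrow> fps_ram e (a * b) = fps_ram e a * fps_ram e b"
  by (simp add: fps_ram_def fps_compose_mult_distrib fls_times_fps_to_fls)

lemma fls_ram_fps_to_fls:
  assumes "e \<ge> 1"
  shows "fls_ram e (fps_to_fls c) = fps_ram e c"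
proof (intro fls_eqI)
  fix k
  have "fls_ram e (fps_to_fls c) $$ k = (if int e dvd k then fps_to_fls c $$ (k div int e) else 0)"
    unfolding fls_ram_def
    by (rule nth_Abs_fls_ex_lower_bound, rule exI[of _ 0]) (use assms in \<open>auto simp: pos_imp_zdiv_neg_iff\<close>)
  also have "\<dots> = fps_ram e c $$ k"
    using assms by (auto simp: fps_ram_nth pos_imp_zdiv_neg_iff)
  finally show "fls_ram e (fps_to_fls c) $$ k = fps_ram e c $$ k" .
qed

lemma emb_fls_poly_fls_poly:
  assumes "e \<ge> 1"
  shows "emb_fls_poly e (fls_poly p) = map_poly (fps_ram e) p"
proof -
  have "fls_ram e 0 = 0" using fls_ram_fps_to_fls[OF assms, of 0] by simp
  then show ?thesis
    unfolding emb_fls_poly_def fls_poly_def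
    by (intro poly_eqI) (simp add: coeff_map_poly fls_ram_fps_to_fls[OF assms])
qed

locale idom_hom =
  fixes h :: "'a::idom \<Rightarrow> 'b::idom"
  assumes hom_0: "h 0 = 0" and hom_1: "h 1 = 1"
    and hom_add: "h (x + y) = h x + h y" and hom_mult: "h (x * y) = h x * h y"
begin

lemma hom_uminus: "h (- x) = - h x"
  by (metis add.right_inverse eq_neg_iff_add_eq_0 hom_0 hom_add)

lemma hom_diff: "h (x - y) = h x - h y"
  using hom_add[of x "- y"] hom_uminus by simp

lemma hom_sum: "h (\<Sum>i\<in>S. g i) = (\<Sum>i\<in>S. h (g i))"
  by (induction S rule: infinite_finite_induct) (auto simp: hom_0 hom_add)

lemma hom_of_nat: "h (of_nat k) = of_nat k"
  by (induction k) (auto simp: hom_0 hom_1 hom_add)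

lemma map_poly_add: "map_poly h (p + q) = map_poly h p + map_poly h q"
  by (intro poly_eqI) (simp add: coeff_map_poly hom_0 hom_add)

lemma map_poly_diff: "map_poly h (p - q) = map_poly h p - map_poly h q"
  by (intro poly_eqI) (simp add: coeff_map_poly hom_0 hom_diff)

lemma map_poly_mult: "map_poly h (p * q) = map_poly h p * map_poly h q"
  by (intro poly_eqI) (simp add: coeff_map_poly hom_0 coeff_mult hom_sum hom_mult)

lemma map_poly_smult: "map_poly h (smult c p) = smult (h c) (map_poly h p)"
  by (intro poly_eqI) (simp add: coeff_map_poly hom_0 hom_mult)

lemma map_poly_pderiv: "map_poly h (pderiv p) = pderiv (map_poly h p)"
  by (intro poly_eqI)
     (simp add: coeff_map_poly hom_0 hom_mult coeff_pderiv hom_of_nat[of "Suc _", simplified])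

lemma map_poly_X: "map_poly h [:0, 1:] = [:0, 1:]"
  by (simp add: map_poly_pCons hom_0 hom_1)

end

lemma idom_hom_fps_ram: "e \<ge> 1 \<Longrightarrow> idom_hom (fps_ram e)"
  by unfold_locales auto

lemma idom_hom_fps_to_fls: "idom_hom (fps_to_fls :: complex fps \<Rightarrow> complex fls)"
  by unfold_locales (auto simp: fls_times_fps_to_fls)

lemma remainder_tangent_split:
  fixes f r :: "complex fps poly"
  assumes "degree f = n" "lead_coeff f = 1" "n \<ge> 2" "degree r < n" "p = q * f + r"
  defines "lam \<equiv> fps_const (1 / of_nat n) * coeff r (n - 1)"
  shows "degree (fls_poly (r - smult lam (pderiv f))) < n - 1"
    and "fls_poly p = fls_poly (q * f) + smult (fps_to_fls lam) (fls_poly (pderiv f))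
           + fls_poly (r - smult lam (pderiv f))"
proof -
  interpret fl: idom_hom "fps_to_fls :: complex fps \<Rightarrow> complex fls"
    by (rule idom_hom_fps_to_fls)
  let ?r = "r - smult lam (pderiv f)"
  have "degree (pderiv f) \<le> n - 1" using assms(1) by (simp add: degree_pderiv)
  then have le: "degree ?r \<le> n - 1"
    using assms(4) by (intro degree_diff_le) (auto intro: order.trans[OF degree_smult_le])
  have top: "coeff ?r (n - 1) = 0"
    using assms by (simp add: coeff_pderiv fps_of_nat[symmetric] del: fps_of_nat)
  have "degree ?r < n - 1"
  proof (cases "?r = 0")
    case False
    then have "degree ?r \<noteq> n - 1" using top leading_coeff_neq_0 by metis
    with le show ?thesis by simp
  qed (use assms(3) in simp)
  then show "degree (fls_poly ?r) < n - 1"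
    unfolding fls_poly_def using map_poly_degree_leq le_less_trans by blast
  show "fls_poly p = fls_poly (q * f) + smult (fps_to_fls lam) (fls_poly (pderiv f)) + fls_poly ?r"
    unfolding fls_poly_def assms(5) fl.map_poly_add fl.map_poly_diff fl.map_poly_smult by simp
qed

definition fls_tderiv :: "complex fls \<Rightarrow> complex fls" where
  "fls_tderiv c = fls_X * fls_deriv c"

lemma fls_tderiv_nth [simp]: "fls_tderiv c $$ k = of_int k * c $$ k"
  by (simp add: fls_tderiv_def fls_X_times_conv_shift)

lemma fls_tderiv_mult: "fls_tderiv (a * b) = fls_tderiv a * b + a * fls_tderiv b"
  by (simp add: fls_tderiv_def algebra_simps)

lemma fps_ram_X_deriv:
  assumes "e \<ge> 1"
  shows "fps_ram e (fps_X * fps_deriv c) = fls_const (1 / of_nat e) * fls_tderiv (fps_ram e c)"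
proof (intro fls_eqI)
  fix k
  show "fps_ram e (fps_X * fps_deriv c) $$ k = (fls_const (1 / of_nat e) * fls_tderiv (fps_ram e c)) $$ k"
  proof (cases "0 \<le> k \<and> int e dvd k")
    case True
    then obtain s where s: "k = int (e * s)"
      by (metis dvdE mult_of_nat_commute nonneg_int_cases of_nat_mult zero_le_mult_iff assms
          not_one_le_zero of_nat_le_0_iff)
    have "fps_ram e (fps_X * fps_deriv c) $$ k = of_nat s * c $ s"
      using fps_ram_nth_mult[OF assms, of "fps_X * fps_deriv c" s] unfolding s
      by (cases s) (simp_all del: fps_ram_mult)
    moreover have "(fls_const (1 / of_nat e) * fls_tderiv (fps_ram e c)) $$ k = of_nat s * c $ s"
      using assms fps_ram_nth_mult[OF assms, of c s] unfolding s by (simp add: field_simps)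
    ultimately show ?thesis by simp
  qed (use assms in \<open>auto simp: fps_ram_nth simp del: fps_ram_mult\<close>)
qed

section \<open>Orders of Laurent series\<close>

definition fls_val_ge :: "'a::comm_ring_1 fls \<Rightarrow> int \<Rightarrow> bool" where
  "fls_val_ge c N \<longleftrightarrow> (\<forall>k<N. c $$ k = 0)"

lemma fls_val_ge_0 [simp]: "fls_val_ge 0 N"
  by (simp add: fls_val_ge_def)

lemma fls_val_ge_mono: "fls_val_ge c A \<Longrightarrow> B \<le> A \<Longrightarrow> fls_val_ge c B"
  by (simp add: fls_val_ge_def)

lemma fls_val_ge_add: "fls_val_ge a N \<Longrightarrow> fls_val_ge b N \<Longrightarrow> fls_val_ge (a + b) N"
  by (simp add: fls_val_ge_def)

lemma fls_val_ge_diff: "fls_val_ge a N \<Longrightarrow> fls_val_ge b N \<Longrightarrow> fls_val_ge (a - b) N"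
  by (simp add: fls_val_ge_def)

lemma fls_val_ge_sum: "(\<And>i. i \<in> S \<Longrightarrow> fls_val_ge (g i) N) \<Longrightarrow> fls_val_ge (\<Sum>i\<in>S. g i) N"
  by (induction S rule: infinite_finite_induct) (auto intro: fls_val_ge_add)

lemma fls_val_ge_subdegree: "fls_val_ge c (fls_subdegree c)"
  unfolding fls_val_ge_def by (metis fls_eq0_below_subdegree)

lemma fls_val_ge_mult:
  assumes "fls_val_ge a A" "fls_val_ge b B"
  shows "fls_val_ge (a * b) (A + B)"
proof (cases "a = 0 \<or> b = 0")
  case False
  then have "A \<le> fls_subdegree a" "B \<le> fls_subdegree b"
    using assms by (auto simp: fls_val_ge_def intro: fls_subdegree_geI)
  then show ?thesis unfolding fls_val_ge_def by (auto intro: fls_times_nth_eq0)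
qed auto

lemma fls_val_ge_const_mult: "fls_val_ge a A \<Longrightarrow> fls_val_ge (fls_const c * a) A"
  using fls_val_ge_mult[of "fls_const c" 0 a A] by (simp add: fls_val_ge_def)

lemma fls_val_ge_power: "fls_val_ge a A \<Longrightarrow> fls_val_ge (a ^ l) (int l * A)"
proof (induction l)
  case (Suc l)
  then show ?case using fls_val_ge_mult[of a A "a ^ l" "int l * A"] by (simp add: algebra_simps)
qed (simp add: fls_val_ge_def)

lemma nu_pui_ge:
  assumes "fls_val_ge c N" "e \<ge> 1"
  shows "ereal (real_of_int N / real e) \<le> nu_pui e c"
proof (cases "c = 0")
  case False
  then have "N \<le> fls_subdegree c" using assms by (auto simp: fls_val_ge_def intro: fls_subdegree_geI)
  then show ?thesis using False assms by (simp add: nu_pui_def divide_right_mono)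
qed (simp add: nu_pui_def)

lemma nu_fps_ge:
  assumes "fls_val_ge (fps_ram e c) N" "e \<ge> 1"
  shows "ereal (real_of_int N / real e) \<le> nu_fps c"
proof (cases "c = 0")
  case False
  define s where "s = subdegree c"
  have "fps_ram e c $$ int (e * s) \<noteq> 0"
    using False fps_ram_nth_mult[OF assms(2)] by (simp add: s_def)
  then have "N \<le> int (e * s)" using assms(1) by (meson fls_val_ge_def not_le)
  then have "real_of_int N \<le> real e * real s" by (metis of_int_le_iff of_int_of_nat_eq of_nat_mult)
  then show ?thesis
    using False assms(2) by (simp add: nu_fps_def s_def divide_le_eq mult.commute)
qed (simp add: nu_fps_def)

lemma fls_val_ge_fps_ram:
  assumes "e \<ge> 1" "\<And>s. int (e * s) < N \<Longrightarrow> c $ s = 0"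
  shows "fls_val_ge (fps_ram e c) N"
  unfolding fls_val_ge_def
proof (intro allI impI)
  fix k assume "k < N"
  show "fps_ram e c $$ k = 0"
  proof (cases "0 \<le> k \<and> int e dvd k")
    case True
    then obtain s where "k = int (e * s)"
      by (metis dvdE nonneg_int_cases of_nat_mult zero_le_mult_iff assms(1) not_one_le_zero
          of_nat_le_0_iff)
    then show ?thesis using assms \<open>k < N\<close> by (simp add: fps_ram_nth)
  qed (use assms in \<open>auto simp: fps_ram_nth\<close>)
qed

text \<open>\<open>t d/dt\<close> multiplies the coefficient of \<open>t\<^sup>m\<close> by \<open>m\<close>.\<close>
lemma fls_val_ge_tderiv_diff:
  assumes "fls_val_ge x (int m)"
  shows "fls_val_ge (fls_tderiv x - of_nat m * x) (int m + 1)"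
  unfolding fls_val_ge_def
proof (intro allI impI)
  fix k :: int assume "k < int m + 1"
  then consider "k < int m" | "k = int m" by linarith
  then show "(fls_tderiv x - of_nat m * x) $$ k = 0"
    by cases (use assms in \<open>simp_all add: fls_val_ge_def fls_of_nat\<close>)
qed

section \<open>The basis \<open>\<epsilon>\<^sub>i\<close> and the Euler identity\<close>

lemma smult_sum_right: "smult c (\<Sum>i\<in>S. g i) = (\<Sum>i\<in>S. smult c (g i))"
  by (induction S rule: infinite_finite_induct) (auto simp: smult_add_right)

definition poly_tderiv :: "complex fls poly \<Rightarrow> complex fls poly" where
  "poly_tderiv p = map_poly fls_tderiv p"

lemma coeff_poly_tderiv [simp]: "coeff (poly_tderiv p) l = fls_tderiv (coeff p l)"
  by (simp add: poly_tderiv_def coeff_map_poly fls_tderiv_def)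

lemma poly_tderiv_mult_linear:
  "poly_tderiv (p * [:- a, 1:]) = poly_tderiv p * [:- a, 1:] - [:fls_tderiv a:] * p"
proof (intro poly_eqI)
  fix l
  have c: "\<And>q. coeff (q * [:- a, 1:]) l = (case l of 0 \<Rightarrow> 0 | Suc j \<Rightarrow> coeff q j) - a * coeff q l"
    by (simp add: mult_pCons_right coeff_pCons split: nat.split)
  show "coeff (poly_tderiv (p * [:- a, 1:])) l = coeff (poly_tderiv p * [:- a, 1:] - [:fls_tderiv a:] * p) l"
    unfolding coeff_diff coeff_poly_tderiv c
    by (auto simp: fls_tderiv_mult fls_tderiv_def algebra_simps split: nat.split)
qed

lemma eps_Suc:
  "i < N \<Longrightarrow> eps (Suc N) a i = [:- a N, 1:] * eps N a i"
proof -
  assume "i < N"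
  then have "{..<Suc N} - {i} = insert N ({..<N} - {i})" by auto
  then show ?thesis by (simp add: eps_def)
qed

lemma eps_last: "eps (Suc N) a N = (\<Prod>i<N. [:- a i, 1:])"
proof -
  have "{..<Suc N} - {N} = {..<N}" by auto
  then show ?thesis by (simp add: eps_def)
qed

text \<open>For \<open>\<delta> = M/e\<close> the left-hand side is \<open>N M\<close> times the image of \<open>h\<close> under \<open>x = t\<^sup>e\<close>.\<close>
lemma euler_identity_prod:
  fixes a :: "nat \<Rightarrow> complex fls" and M :: "complex fls"
  shows "smult (of_nat N * M) (\<Prod>i<N. [:- a i, 1:]) - smult M ([:0, 1:] * pderiv (\<Prod>i<N. [:- a i, 1:]))
          - poly_tderiv (\<Prod>i<N. [:- a i, 1:])
        = (\<Sum>i<N. smult (fls_tderiv (a i) - M * a i) (eps N a i))"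
proof -
  have "[:of_nat N * M:] * (\<Prod>i<N. [:- a i, 1:]) - [:M:] * [:0, 1:] * pderiv (\<Prod>i<N. [:- a i, 1:])
      - poly_tderiv (\<Prod>i<N. [:- a i, 1:])
    = (\<Sum>i<N. [:fls_tderiv (a i) - M * a i:] * eps N a i)"
  proof (induction N)
    case 0
    then show ?case by (simp add: poly_tderiv_def map_poly_1 fls_tderiv_def)
  next
    case (Suc N)
    define P where "P = (\<Prod>i<N. [:- a i, 1:])"
    define L where "L = [:- a N, 1:]"
    have PS: "(\<Prod>i<Suc N. [:- a i, 1:]) = P * L" by (simp add: P_def L_def mult.commute)
    have sumS: "(\<Sum>i<Suc N. [:fls_tderiv (a i) - M * a i:] * eps (Suc N) a i)
       = L * (\<Sum>i<N. [:fls_tderiv (a i) - M * a i:] * eps N a i) + [:fls_tderiv (a N) - M * a N:] * P"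
      by (simp add: eps_Suc eps_last P_def L_def sum_distrib_left algebra_simps)
    have d: "poly_tderiv (P * L) = poly_tderiv P * L - [:fls_tderiv (a N):] * P"
      unfolding L_def by (rule poly_tderiv_mult_linear)
    have "[:of_nat (Suc N) * M:] * (P * L) - [:M:] * [:0, 1:] * pderiv (P * L) - poly_tderiv (P * L)
       = L * ([:of_nat N * M:] * P - [:M:] * [:0, 1:] * pderiv P - poly_tderiv P)
         + [:fls_tderiv (a N) - M * a N:] * P"
    proof -
      have "[:of_nat (Suc N) * M:] = [:of_nat N * M:] + [:M:]" by (simp add: algebra_simps)
      moreover have "[:fls_tderiv (a N) - M * a N:] = [:fls_tderiv (a N):] - [:M:] * [:a N:]" by simp
      moreover have "pderiv L = 1" "L = [:0, 1:] - [:a N:]" by (simp_all add: L_def pderiv_pCons)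
      ultimately show ?thesis unfolding d pderiv_mult by algebra
    qed
    then show ?case using Suc unfolding PS sumS by (simp add: P_def)
  qed
  then show ?thesis by (simp add: mult.assoc)
qed

lemma pderiv_prod_linear: "pderiv (\<Prod>i<n. [:- a i, 1:]) = (\<Sum>i<n. eps n a i)"
  unfolding pderiv_prod eps_def by (simp add: pderiv_pCons)

lemma degree_eps: "i < n \<Longrightarrow> degree (eps n a i) = n - 1"
  unfolding eps_def by (subst degree_prod_sum_eq) auto

lemma coeff_eps_top: "i < n \<Longrightarrow> coeff (eps n a i) (n - 1) = 1"
  using lead_coeff_prod[of "\<lambda>j. [:- a j, 1:]" "{..<n} - {i}"] degree_eps[of i n a]
  unfolding eps_def by simp

lemma poly_eps_other: "j < n \<Longrightarrow> i \<noteq> j \<Longrightarrow> poly (eps n a i) (a j) = 0"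
  unfolding eps_def poly_prod by (rule prod_zero) auto

lemma poly_eps_self: "inj_on a {..<n} \<Longrightarrow> i < n \<Longrightarrow> poly (eps n a i) (a i) \<noteq> 0"
  unfolding eps_def poly_prod by (auto simp: inj_on_def)

lemma poly_eps_sum:
  assumes "j < n"
  shows "poly (\<Sum>i<n. smult (c i) (eps n a i)) (a j) = c j * poly (eps n a j) (a j)"
proof -
  have "poly (\<Sum>i<n. smult (c i) (eps n a i)) (a j) = (\<Sum>i<n. c i * poly (eps n a i) (a j))"
    by (simp add: poly_sum)
  also have "\<dots> = (\<Sum>i\<in>{j}. c i * poly (eps n a i) (a j))"
    using assms by (intro sum.mono_neutral_right) (auto simp: poly_eps_other)
  finally show ?thesis by simp
qed

lemma eps_coords_sum:
  assumes inj: "inj_on a {..<n}" and j: "j < n"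
  shows "eps_coords n a (\<Sum>i<n. smult (c i) (eps n a i)) j = c j"
proof -
  define c' where "c' i = (if i < n then c i else 0)" for i
  have "eps_coords n a (\<Sum>i<n. smult (c i) (eps n a i)) = c'"
    unfolding eps_coords_def
  proof (rule the_equality)
    show "(\<forall>i\<ge>n. c' i = 0) \<and> (\<Sum>i<n. smult (c i) (eps n a i)) = (\<Sum>i<n. smult (c' i) (eps n a i))"
      by (simp add: c'_def)
  next
    fix d
    assume d: "(\<forall>i\<ge>n. d i = 0) \<and> (\<Sum>i<n. smult (c i) (eps n a i)) = (\<Sum>i<n. smult (d i) (eps n a i))"
    show "d = c'"
    proof
      fix i
      show "d i = c' i"
      proof (cases "i < n")
        case True
        then have "d i * poly (eps n a i) (a i) = c i * poly (eps n a i) (a i)"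
          using d poly_eps_sum[OF True, of c a] poly_eps_sum[OF True, of d a] by metis
        then show ?thesis using poly_eps_self[OF inj True] True by (simp add: c'_def)
      qed (use d in \<open>auto simp: c'_def\<close>)
    qed
  qed
  then show ?thesis using j by (simp add: c'_def)
qed

text \<open>Both sides have degree \<open>< n\<close> and agree at the \<open>n\<close> distinct points \<open>a\<^sub>j\<close>.\<close>
lemma remainder_eps_sum:
  assumes inj: "inj_on a {..<n}"
    and div: "W * (\<Sum>i<n. smult (c i) (eps n a i)) = Q * (\<Prod>i<n. [:- a i, 1:]) + R"
    and deg: "degree R < n"
  shows "R = (\<Sum>i<n. smult (c i * poly W (a i)) (eps n a i))"
proof (rule poly_eqI_degree)
  show "card (a ` {..<n}) > degree R" using deg inj by (simp add: card_image)
  have "degree (\<Sum>i<n. smult (c i * poly W (a i)) (eps n a i)) \<le> n - 1"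
    by (intro degree_sum_le) (auto intro: order.trans[OF degree_smult_le] simp: degree_eps)
  then show "card (a ` {..<n}) > degree (\<Sum>i<n. smult (c i * poly W (a i)) (eps n a i))"
    using deg inj by (simp add: card_image)
  fix x assume "x \<in> a ` {..<n}"
  then obtain j where j: "j < n" "x = a j" by auto
  have "poly (\<Prod>i<n. [:- a i, 1:]) (a j) = 0"
    using j(1) unfolding poly_prod by (intro prod_zero) auto
  then have "poly R (a j) = poly W (a j) * poly (\<Sum>i<n. smult (c i) (eps n a i)) (a j)"
    using arg_cong[OF div, of "\<lambda>p. poly p (a j)"] by simp
  then show "poly R x = poly (\<Sum>i<n. smult (c i * poly W (a i)) (eps n a i)) x"
    using j poly_eps_sum[OF j(1), of "\<lambda>i. c i * poly W (a i)" a] poly_eps_sum[OF j(1), of c a]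
    by (simp add: mult_ac)
qed

lemma val_ge_eps_sum:
  assumes "e \<ge> 1" "inj_on a {..<n}" "emb_fls_poly e p = (\<Sum>i<n. smult (c i) (eps n a i))"
    and "\<And>i. i < n \<Longrightarrow> fls_val_ge (c i) N"
  shows "ereal (real_of_int N / real e) \<le> val n e a p"
  unfolding val_def assms(3)
proof (rule INF_greatest)
  fix i assume "i \<in> {..<n}"
  then show "ereal (real_of_int N / real e) \<le> nu_pui e (eps_coords n a (\<Sum>i<n. smult (c i) (eps n a i)) i)"
    using assms by (simp add: eps_coords_sum nu_pui_ge)
qed

lemma fls_val_ge_coeff_prod_linear:
  assumes "\<And>i. i < N \<Longrightarrow> fls_val_ge (a i) M"
  shows "fls_val_ge (coeff (\<Prod>i<N. [:- a i, 1:]) l) ((int N - int l) * M)"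
  using assms
proof (induction N arbitrary: l)
  case 0
  then show ?case by (cases l) (auto simp: fls_val_ge_def)
next
  case (Suc N)
  define P where "P = (\<Prod>i<N. [:- a i, 1:])"
  have IH: "fls_val_ge (coeff P l) ((int N - int l) * M)" for l
    unfolding P_def using Suc by auto
  have "coeff (P * [:- a N, 1:]) l = (case l of 0 \<Rightarrow> 0 | Suc j \<Rightarrow> coeff P j) - a N * coeff P l"
    by (simp add: mult_pCons_right coeff_pCons split: nat.split)
  moreover have "fls_val_ge (a N * coeff P l) ((int (Suc N) - int l) * M)"
    using fls_val_ge_mult[OF Suc.prems[of N] IH[of l]] by (simp add: algebra_simps)
  moreover have "fls_val_ge (case l of 0 \<Rightarrow> 0 | Suc j \<Rightarrow> coeff P j) ((int (Suc N) - int l) * M)"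
    using IH by (cases l) (simp_all add: algebra_simps)
  ultimately show ?case by (simp add: P_def fls_val_ge_diff)
qed

text \<open>Otherwise \<open>x\<^sup>n\<close> alone attains the least order in \<open>P(x)\<close>.\<close>
lemma fls_subdegree_root_pos:
  fixes P :: "complex fls poly"
  assumes "degree P = n" "coeff P n = 1" "\<And>l. l < n \<Longrightarrow> fls_val_ge (coeff P l) 1"
    and "poly P x = 0" "x \<noteq> 0"
  shows "fls_subdegree x \<ge> 1"
proof (rule ccontr)
  assume "\<not> fls_subdegree x \<ge> 1"
  define s where "s = fls_subdegree x"
  have s0: "s \<le> 0" using \<open>\<not> fls_subdegree x \<ge> 1\<close> by (simp add: s_def)
  have "poly P x = (\<Sum>l<n. coeff P l * x ^ l) + x ^ n"
    using assms(1,2) by (simp add: poly_altdef lessThan_Suc_atMost[symmetric])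
  moreover have "fls_val_ge (\<Sum>l<n. coeff P l * x ^ l) (int n * s + 1)"
  proof (rule fls_val_ge_sum)
    fix l assume "l \<in> {..<n}"
    then have "fls_val_ge (coeff P l * x ^ l) (1 + int l * s)"
      using assms(3) fls_val_ge_mult fls_val_ge_power[OF fls_val_ge_subdegree] s_def by fastforce
    moreover have "int n * s + 1 \<le> 1 + int l * s"
      using \<open>l \<in> {..<n}\<close> s0 mult_right_mono_neg[of "int l" "int n" s] by simp
    ultimately show "fls_val_ge (coeff P l * x ^ l) (int n * s + 1)"
      by (rule fls_val_ge_mono)
  qed
  moreover have "(x ^ n) $$ (int n * s) \<noteq> 0"
    using nth_fls_subdegree_nonzero[of "x ^ n"] assms(5) by (simp add: fls_subdegree_pow s_def)
  ultimately have "poly P x $$ (int n * s) \<noteq> 0" by (simp add: fls_val_ge_def)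
  with assms(4) show False by simp
qed

section \<open>Weights and \<open>\<rho>\<close>\<close>

text \<open>The monomial \<open>x\<^sup>k y\<^sup>l\<close> gets weight \<open>e k + l m\<close>; for \<open>\<delta> = m/e\<close> this is
  \<open>n m\<close> times its contribution to \<open>\<rho>\<close>.\<close>
definition weight_ge :: "nat \<Rightarrow> nat \<Rightarrow> complex fps poly \<Rightarrow> nat \<Rightarrow> bool" where
  "weight_ge e m p W \<longleftrightarrow> (\<forall>k l. coeff p l $ k \<noteq> 0 \<longrightarrow> W \<le> e * k + l * m)"

lemma rho_monomial_value:
  assumes "n > 0" "m > 0" "e > 0"
  shows "real k / (real n * (real m / real e)) + real l / real n = real (e * k + l * m) / real (n * m)"
  using assms by (simp add: field_simps)

lemma rho_ge_weight:
  fixes p :: "complex fps poly"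
  assumes "n > 0" "m > 0" "e > 0" "weight_ge e m p W"
  shows "ereal (real W / real (n * m)) \<le> rho n (real m / real e) p"
  unfolding rho_def
proof (rule Inf_greatest, clarify)
  fix k l assume "coeff p l $ k \<noteq> 0"
  then have "W \<le> e * k + l * m" using assms(4) by (simp add: weight_ge_def)
  then have "real W \<le> real (e * k + l * m)" by (simp only: of_nat_le_iff)
  then have "real W / real (n * m) \<le> real (e * k + l * m) / real (n * m)"
    by (rule divide_right_mono) simp
  then show "ereal (real W / real (n * m)) \<le> ereal (real k / (real n * (real m / real e)) + real l / real n)"
    unfolding rho_monomial_value[OF assms(1-3)] by simp
qed

lemma rho_le_monomial:
  fixes p :: "complex fps poly"
  assumes "n > 0" "m > 0" "e > 0" "coeff p l $ k \<noteq> 0"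
  shows "rho n (real m / real e) p \<le> ereal (real (e * k + l * m) / real (n * m))"
  unfolding rho_def rho_monomial_value[OF assms(1-3), symmetric]
  by (rule Inf_lower) (use assms in blast)

lemma rho_0: "rho n d 0 = \<infinity>"
  by (simp add: rho_def top_ereal_def)

lemma coeff_mult_nonzero_imp:
  fixes p q :: "'a::comm_semiring_1 fps poly"
  assumes "coeff (p * q) l $ k \<noteq> 0"
  obtains i j where "i \<le> l" "j \<le> k" "coeff p i $ j \<noteq> 0" "coeff q (l - i) $ (k - j) \<noteq> 0"
proof -
  have "\<exists>i\<le>l. \<exists>j\<le>k. coeff p i $ j * coeff q (l - i) $ (k - j) \<noteq> 0"
  proof (rule ccontr)
    assume "\<not> ?thesis"
    then have "coeff (p * q) l $ k = 0"
      unfolding coeff_mult fps_sum_nth fps_mult_nth by (auto intro!: sum.neutral)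
    with assms show False by simp
  qed
  with that show ?thesis by (metis mult_not_zero)
qed

lemma rho_mult_ge:
  fixes p q :: "complex fps poly"
  shows "rho n d p + rho n d q \<le> rho n d (p * q)"
  unfolding rho_def[of n d "p * q"]
proof (rule Inf_greatest, clarify)
  let ?v = "\<lambda>k l. real k / (real n * d) + real l / real n"
  fix k l assume "coeff (p * q) l $ k \<noteq> 0"
  then obtain i j where ij: "i \<le> l" "j \<le> k" "coeff p i $ j \<noteq> 0" "coeff q (l - i) $ (k - j) \<noteq> 0"
    by (rule coeff_mult_nonzero_imp)
  have "rho n d p \<le> ereal (?v j i)" unfolding rho_def by (rule Inf_lower) (use ij in blast)
  moreover have "rho n d q \<le> ereal (?v (k - j) (l - i))"
    unfolding rho_def by (rule Inf_lower) (use ij in blast)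
  moreover have "?v j i + ?v (k - j) (l - i) = ?v k l"
    using ij by (simp add: of_nat_diff diff_divide_distrib)
  ultimately show "rho n d p + rho n d q \<le> ereal (?v k l)"
    by (metis add_mono plus_ereal.simps(1))
qed

lemma extremal_monomial:
  fixes p :: "complex fps poly"
  assumes "p \<noteq> 0"
  obtains k l where "coeff p l $ k \<noteq> 0" "weight_ge e m p (e * k + l * m)"
    "\<And>k' l'. coeff p l' $ k' \<noteq> 0 \<Longrightarrow> e * k' + l' * m = e * k + l * m \<Longrightarrow> l' \<le> l"
proof -
  obtain l0 where "coeff p l0 \<noteq> 0" using assms by (metis leading_coeff_0_iff)
  then obtain k0 where "coeff p l0 $ k0 \<noteq> 0" by (metis fps_nonzero_nth)
  then obtain k1 l1 where kl1: "coeff p l1 $ k1 \<noteq> 0"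
    "\<And>k l. coeff p l $ k \<noteq> 0 \<Longrightarrow> e * k1 + l1 * m \<le> e * k + l * m"
    using ex_has_least_nat[of "\<lambda>(k, l). coeff p l $ k \<noteq> 0" "(k0, l0)" "\<lambda>(k, l). e * k + l * m"]
    by fastforce
  define s where "s = e * k1 + l1 * m"
  define L where "L = {l. \<exists>k. coeff p l $ k \<noteq> 0 \<and> e * k + l * m = s}"
  have "finite L" unfolding L_def by (rule finite_subset[of _ "{..degree p}"]) (auto intro: le_degree)
  moreover have "l1 \<in> L" using kl1(1) by (auto simp: L_def s_def)
  ultimately have "Max L \<in> L" and Max_ge: "\<And>l. l \<in> L \<Longrightarrow> l \<le> Max L" by (auto intro: Max_in)
  have L_iff: "l \<in> L \<longleftrightarrow> (\<exists>k. coeff p l $ k \<noteq> 0 \<and> e * k + l * m = s)" for l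
    by (simp add: L_def)
  obtain k where k: "coeff p (Max L) $ k \<noteq> 0" "e * k + Max L * m = s"
    using \<open>Max L \<in> L\<close> L_iff by blast
  show ?thesis
  proof (rule that)
    show "coeff p (Max L) $ k \<noteq> 0" by (rule k(1))
    show "weight_ge e m p (e * k + Max L * m)" using kl1(2) k(2) by (simp add: weight_ge_def s_def)
    fix k' l' assume "coeff p l' $ k' \<noteq> 0" "e * k' + l' * m = e * k + Max L * m"
    then have "l' \<in> L" unfolding L_iff using k(2) by (intro exI[of _ k']) simp
    then show "l' \<le> Max L" by (rule Max_ge)
  qed
qed

text \<open>Any other product of monomials contributing to \<open>x\<^sup>k y\<^sup>l\<^sup>+\<^sup>n\<close> is heavier, or has the same
  weight but a larger \<open>y\<close>-degree in \<open>q\<close>.\<close>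
lemma coeff_mult_extremal:
  fixes q f :: "complex fps poly"
  assumes "e > 0" "degree f \<le> n" "coeff f n $ 0 = 1" "weight_ge e m f (n * m)"
    and q: "weight_ge e m q (e * k + l * m)"
    "\<And>k' l'. coeff q l' $ k' \<noteq> 0 \<Longrightarrow> e * k' + l' * m = e * k + l * m \<Longrightarrow> l' \<le> l"
  shows "coeff (q * f) (l + n) $ k = coeff q l $ k"
proof -
  have product_term: "coeff q i $ j * coeff f (l + n - i) $ (k - j)
      = (if j = k then if i = l then coeff q l $ k else 0 else 0)"
    if ij: "i \<le> l + n" "j \<le> k" for i j
  proof (cases "i = l \<and> j = k")
    case False
    have "coeff q i $ j = 0 \<or> coeff f (l + n - i) $ (k - j) = 0"
    proof (rule ccontr)
      assume "\<not> ?thesis"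
      then have nz: "coeff q i $ j \<noteq> 0" "coeff f (l + n - i) $ (k - j) \<noteq> 0" by auto
      have "l + n - i \<le> n"
      proof (rule ccontr)
        assume "\<not> l + n - i \<le> n"
        then have "coeff f (l + n - i) = 0" using assms(2) by (intro coeff_eq_0) linarith
        with nz(2) show False by simp
      qed
      then have "l \<le> i" by simp
      have A: "e * k + l * m \<le> e * j + i * m" using q(1) nz(1) by (simp add: weight_ge_def)
      have B: "n * m \<le> e * (k - j) + (l + n - i) * m" using assms(4) nz(2) by (simp add: weight_ge_def)
      have "e * (k - j) + e * j = e * k" using ij by (simp add: diff_mult_distrib2)
      moreover have "(l + n - i) * m + i * m = l * m + n * m"
        using ij(1) by (metis add_mult_distrib le_add_diff_inverse2)
      ultimately have tight: "e * j + i * m = e * k + l * m" using A B by linarith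
      then have "i = l" using q(2)[OF nz(1)] \<open>l \<le> i\<close> by simp
      then have "j = k" using tight assms(1) by simp
      with \<open>i = l\<close> False show False by simp
    qed
    then show ?thesis using False by auto
  qed (simp add: assms(3))
  have "coeff (q * f) (l + n) $ k
      = (\<Sum>i\<le>l + n. \<Sum>j=0..k. coeff q i $ j * coeff f (l + n - i) $ (k - j))"
    unfolding coeff_mult fps_sum_nth fps_mult_nth ..
  also have "\<dots> = (\<Sum>i\<le>l + n. \<Sum>j=0..k. if j = k then if i = l then coeff q l $ k else 0 else 0)"
    by (intro sum.cong refl) (simp add: product_term)
  also have "\<dots> = (\<Sum>i\<le>l + n. if i = l then coeff q l $ k else 0)"
    by (intro sum.cong refl) (simp add: sum.delta)
  also have "\<dots> = coeff q l $ k"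
    by (simp add: sum.delta)
  finally show ?thesis .
qed

lemma fls_val_ge_poly_fps_ram:
  fixes w :: "complex fps poly"
  assumes e: "e \<ge> 1" and w: "weight_ge e m w W" and x: "fls_val_ge x (int m)"
  shows "fls_val_ge (poly (map_poly (fps_ram e) w) x) (int W)"
  unfolding poly_altdef
proof (rule fls_val_ge_sum)
  fix i
  have "fls_val_ge (fps_ram e (coeff w i)) (int W - int i * int m)"
  proof (rule fls_val_ge_fps_ram[OF e])
    fix s assume s: "int (e * s) < int W - int i * int m"
    show "coeff w i $ s = 0"
    proof (rule ccontr)
      assume "coeff w i $ s \<noteq> 0"
      then have "W \<le> e * s + i * m" using w by (simp add: weight_ge_def)
      then have "int W \<le> int (e * s) + int i * int m" by (metis of_nat_add of_nat_le_iff of_nat_mult)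
      with s show False by linarith
    qed
  qed
  then have "fls_val_ge (fps_ram e (coeff w i) * x ^ i) (int W - int i * int m + int i * int m)"
    using fls_val_ge_mult fls_val_ge_power[OF x] by blast
  then show "fls_val_ge (coeff (map_poly (fps_ram e) w) i * x ^ i) (int W)"
    by (simp add: coeff_map_poly)
qed

lemma rho_eq_weight:
  fixes w :: "complex fps poly"
  assumes "n > 0" "m > 0" "e > 0" "w \<noteq> 0"
  obtains W where "weight_ge e m w W" "rho n (real m / real e) w = ereal (real W / real (n * m))"
proof -
  obtain k l where kl: "coeff w l $ k \<noteq> 0" "weight_ge e m w (e * k + l * m)"
    by (rule extremal_monomial[OF assms(4)])
  show ?thesis
  proof (rule that[OF kl(2)], rule antisym)
    show "rho n (real m / real e) w \<le> ereal (real (e * k + l * m) / real (n * m))"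
      by (rule rho_le_monomial[OF assms(1-3) kl(1)])
    show "ereal (real (e * k + l * m) / real (n * m)) \<le> rho n (real m / real e) w"
      by (rule rho_ge_weight[OF assms(1-3) kl(2)])
  qed
qed

lemma coeff_hpoly:
  fixes f :: "complex fps poly"
  shows "coeff (hpoly n d f) l $ k
    = coeff f l $ k * (1 - of_nat l / of_nat n - of_nat k / (of_nat n * of_real d))"
proof -
  have "coeff ([:0, 1:] * pderiv f) l = of_nat l * coeff f l"
    by (cases l) (simp_all add: coeff_pderiv mult_pCons_left)
  then have "coeff (hpoly n d f) l = coeff f l - fps_const (1 / of_nat n) * (of_nat l * coeff f l)
      - fps_const (1 / (of_nat n * of_real d)) * (fps_X * fps_deriv (coeff f l))"
    unfolding hpoly_def coeff_diff coeff_smult by (simp add: coeff_map_poly)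
  moreover have "(coeff f l - fps_const (1 / of_nat n) * (of_nat l * coeff f l)
      - fps_const (1 / (of_nat n * of_real d)) * (fps_X * fps_deriv (coeff f l))) $ k
     = coeff f l $ k - 1 / of_nat n * (of_nat l * coeff f l $ k)
       - 1 / (of_nat n * of_real d) * (of_nat k * coeff f l $ k)"
    by (cases k) (simp_all add: fps_of_nat[symmetric] del: fps_of_nat)
  ultimately show ?thesis by (simp add: divide_inverse ring_distribs mult_ac)
qed

locale distinguished_roots =
  fixes f :: "complex fps poly" and n e :: nat and a :: "nat \<Rightarrow> complex fls"
  assumes n_ge_2: "n \<ge> 2"
    and degree_f: "degree f = n"
    and monic_f: "lead_coeff f = 1"
    and distinguished: "map_poly (\<lambda>c. c $ 0) f = monom 1 n"
    and e_pos: "e \<ge> 1"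
    and factorisation: "emb_fls_poly e (fls_poly f) = (\<Prod>i<n. [:- a i, 1:])"
    and roots_inj: "inj_on a {..<n}"
begin

lemma map_fps_ram_f: "map_poly (fps_ram e) f = (\<Prod>i<n. [:- a i, 1:])"
  using factorisation emb_fls_poly_fls_poly[OF e_pos] by simp

lemma coeff_prod_roots: "coeff (\<Prod>i<n. [:- a i, 1:]) l = fps_ram e (coeff f l)"
  unfolding map_fps_ram_f[symmetric] by (simp add: coeff_map_poly)

lemma coeff_f_top: "coeff f n = 1"
  using monic_f degree_f by simp

lemma root_subdegree_pos:
  assumes "i < n" "a i \<noteq> 0"
  shows "fls_subdegree (a i) \<ge> 1"
proof (rule fls_subdegree_root_pos)
  show "degree (\<Prod>i<n. [:- a i, 1:]) = n" by (subst degree_prod_sum_eq) auto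
  show "coeff (\<Prod>i<n. [:- a i, 1:]) n = 1"
    using lead_coeff_prod[of "\<lambda>j. [:- a j, 1:]" "{..<n}"] \<open>degree _ = n\<close> by simp
  show "poly (\<Prod>i<n. [:- a i, 1:]) (a i) = 0"
    using assms(1) unfolding poly_prod by (intro prod_zero) auto
  fix l assume "l < n"
  have "coeff f l $ 0 = 0"
    using arg_cong[OF distinguished, of "\<lambda>p. coeff p l"] \<open>l < n\<close> by (simp add: coeff_map_poly)
  show "fls_val_ge (coeff (\<Prod>i<n. [:- a i, 1:]) l) 1"
    unfolding coeff_prod_roots
  proof (rule fls_val_ge_fps_ram[OF e_pos])
    fix s assume "int (e * s) < 1"
    then have "e * s = 0" by linarith
    then have "s = 0" using e_pos by simp
    with \<open>coeff f l $ 0 = 0\<close> show "coeff f l $ s = 0" by simp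
  qed
qed (use assms in auto)

lemma obtain_root_order:
  obtains m :: nat where "m \<ge> 1" "\<And>i. i < n \<Longrightarrow> fls_val_ge (a i) (int m)"
    "delta n e a = real m / real e"
proof -
  define S where "S = {fls_subdegree (a i) | i. i < n \<and> a i \<noteq> 0}"
  have "a 0 \<noteq> a 1" using inj_onD[OF roots_inj, of 0 1] n_ge_2 by auto
  obtain i1 where "i1 < n" "a i1 \<noteq> 0"
  proof (cases "a 0 = 0")
    case True
    then show ?thesis using that[of 1] \<open>a 0 \<noteq> a 1\<close> n_ge_2 by simp
  qed (use that[of 0] n_ge_2 in simp)
  then have "S \<noteq> {}" by (auto simp: S_def)
  have "finite S" unfolding S_def by simp
  obtain i0 where i0: "i0 < n" "a i0 \<noteq> 0" "fls_subdegree (a i0) = Min S"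
    using Min_in[OF \<open>finite S\<close> \<open>S \<noteq> {}\<close>] by (auto simp: S_def)
  define m where "m = nat (Min S)"
  have "Min S \<ge> 1" using root_subdegree_pos[OF i0(1,2)] i0(3) by simp
  then have m: "int m = Min S" "m \<ge> 1" by (simp_all add: m_def)
  have val_ge: "fls_val_ge (a i) (int m)" if "i < n" for i
  proof (cases "a i = 0")
    case False
    then have "fls_subdegree (a i) \<in> S" using that by (auto simp: S_def)
    then have "Min S \<le> fls_subdegree (a i)" using \<open>finite S\<close> by simp
    then show ?thesis using m(1) fls_val_ge_subdegree fls_val_ge_mono by metis
  qed simp
  have "(INF i\<in>{..<n}. nu_pui e (a i)) = ereal (real m / real e)"
  proof (rule antisym)
    show "(INF i\<in>{..<n}. nu_pui e (a i)) \<le> ereal (real m / real e)"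
      using i0(1,2) by (intro INF_lower2[of i0]) (auto simp: nu_pui_def i0(3) m(1)[symmetric])
    show "ereal (real m / real e) \<le> (INF i\<in>{..<n}. nu_pui e (a i))"
      using val_ge nu_pui_ge[OF _ e_pos] by (intro INF_greatest) fastforce
  qed
  then have "delta n e a = real m / real e" by (simp add: delta_def)
  with m(2) val_ge that show ?thesis by blast
qed

end

locale distinguished_weights = distinguished_roots +
  fixes m :: nat
  assumes m_pos: "m \<ge> 1"
    and roots_val_ge: "\<And>i. i < n \<Longrightarrow> fls_val_ge (a i) (int m)"
    and delta_eq: "delta n e a = real m / real e"
begin

abbreviation h :: "complex fps poly" where
  "h \<equiv> hpoly n (delta n e a) f"

lemma rho_delta: "rho n (delta n e a) p = rho n (real m / real e) p"
  by (simp add: delta_eq)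

lemma weight_f: "weight_ge e m f (n * m)"
  unfolding weight_ge_def
proof (intro allI impI)
  fix k l assume nz: "coeff f l $ k \<noteq> 0"
  then have "coeff f l \<noteq> 0" by auto
  then have "l \<le> n" using degree_f le_degree by blast
  have "fls_val_ge (coeff (\<Prod>i<n. [:- a i, 1:]) l) ((int n - int l) * int m)"
    by (rule fls_val_ge_coeff_prod_linear) (rule roots_val_ge)
  moreover have "coeff (\<Prod>i<n. [:- a i, 1:]) l $$ int (e * k) \<noteq> 0"
    using nz fps_ram_nth_mult[OF e_pos] by (simp add: coeff_prod_roots)
  ultimately have "(int n - int l) * int m \<le> int (e * k)"
    unfolding fls_val_ge_def by (meson not_le)
  then have "int (n * m) \<le> int (e * k + l * m)" by (simp add: left_diff_distrib)
  then show "n * m \<le> e * k + l * m" by (simp only: of_nat_le_iff)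
qed

text \<open>The Euler operator defining \<open>h\<close> annihilates the monomials of weight exactly \<open>n m\<close>.\<close>
lemma weight_h: "weight_ge e m h (n * m + 1)"
  unfolding weight_ge_def
proof (intro allI impI)
  fix k l assume nz: "coeff h l $ k \<noteq> 0"
  then have fnz: "coeff f l $ k \<noteq> 0" by (simp add: coeff_hpoly)
  have "e * k + l * m \<noteq> n * m"
  proof
    assume eq: "e * k + l * m = n * m"
    have "(1 - of_nat l / of_nat n - of_nat k / (of_nat n * of_real (delta n e a)) :: complex)
        * (of_nat n * of_nat m) = of_nat (n * m) - of_nat (l * m) - of_nat (e * k)"
      using n_ge_2 m_pos e_pos by (simp add: delta_eq field_simps)
    also have "\<dots> = 0" unfolding eq[symmetric] by simp
    finally have "(1 - of_nat l / of_nat n - of_nat k / (of_nat n * of_real (delta n e a)) :: complex) = 0"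
      using n_ge_2 m_pos by simp
    with nz show False by (simp add: coeff_hpoly)
  qed
  moreover have "n * m \<le> e * k + l * m" using weight_f fnz by (simp add: weight_ge_def)
  ultimately show "n * m + 1 \<le> e * k + l * m" by linarith
qed

lemma rho_h_ge: "ereal (1 + 1 / real (n * m)) \<le> rho n (delta n e a) h"
proof -
  have "ereal (real (n * m + 1) / real (n * m)) \<le> rho n (delta n e a) h"
    unfolding rho_delta using n_ge_2 m_pos e_pos weight_h by (intro rho_ge_weight) auto
  moreover have "real (n * m + 1) / real (n * m) = 1 + 1 / real (n * m)"
    using n_ge_2 m_pos by (simp add: field_simps)
  ultimately show ?thesis by simp
qed

lemma fps_ram_h_eps_expansion:
  obtains c where "\<And>i. i < n \<Longrightarrow> fls_val_ge (c i) (int m + 1)"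
    "map_poly (fps_ram e) h = (\<Sum>i<n. smult (c i) (eps n a i))"
proof -
  interpret ram: idom_hom "fps_ram e" by (rule idom_hom_fps_ram[OF e_pos])
  define P where "P = (\<Prod>i<n. [:- a i, 1:])"
  define M :: "complex fls" where "M = of_nat m"
  define C :: "complex fls" where "C = fls_const (1 / (of_nat n * of_nat m))"
  have CnM: "C * (of_nat n * M) = 1" using n_ge_2 m_pos by (simp add: C_def M_def fls_of_nat)
  have "map_poly (fps_ram e) (map_poly (\<lambda>c. fps_X * fps_deriv c) f)
      = smult (fls_const (1 / of_nat e)) (poly_tderiv P)"
    by (intro poly_eqI)
       (simp add: coeff_map_poly fps_ram_X_deriv[OF e_pos] coeff_prod_roots P_def del: fps_ram_mult)
  then have "map_poly (fps_ram e) h = P - smult (fls_const (1 / of_nat n)) ([:0, 1:] * pderiv P)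
      - smult (fls_const (1 / (of_nat n * of_real (delta n e a))))
          (smult (fls_const (1 / of_nat e)) (poly_tderiv P))"
    unfolding hpoly_def ram.map_poly_diff ram.map_poly_smult ram.map_poly_mult ram.map_poly_pderiv
      ram.map_poly_X map_fps_ram_f P_def by simp
  also have "\<dots> = smult C (smult (of_nat n * M) P - smult M ([:0, 1:] * pderiv P) - poly_tderiv P)"
  proof -
    have "C * M = fls_const (1 / of_nat n)"
      using m_pos by (simp add: C_def M_def fls_of_nat)
    moreover have "fls_const (1 / (of_nat n * of_real (delta n e a))) * fls_const (1 / of_nat e) = C"
      using e_pos by (simp add: C_def delta_eq)
    ultimately show ?thesis unfolding smult_diff_right smult_smult CnM by simp
  qed
  also have "\<dots> = (\<Sum>i<n. smult (C * (fls_tderiv (a i) - M * a i)) (eps n a i))"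
    unfolding P_def euler_identity_prod by (simp add: smult_sum_right)
  finally have expansion: "map_poly (fps_ram e) h = \<dots>" .
  have val: "fls_val_ge (C * (fls_tderiv (a i) - M * a i)) (int m + 1)" if "i < n" for i
    unfolding C_def M_def by (intro fls_val_ge_const_mult fls_val_ge_tderiv_diff roots_val_ge that)
  show ?thesis using val expansion by (rule that)
qed

lemma remainder_eps_expansion:
  fixes w q r :: "complex fps poly"
  assumes "weight_ge e m w W" "w * h = q * f + r" "degree r < n"
  obtains c where "\<And>i. i < n \<Longrightarrow> fls_val_ge (c i) (int W + int m + 1)"
    "map_poly (fps_ram e) r = (\<Sum>i<n. smult (c i) (eps n a i))"
proof -
  interpret ram: idom_hom "fps_ram e" by (rule idom_hom_fps_ram[OF e_pos])
  obtain ch where ch: "\<And>i. i < n \<Longrightarrow> fls_val_ge (ch i) (int m + 1)"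
    "map_poly (fps_ram e) h = (\<Sum>i<n. smult (ch i) (eps n a i))"
    using fps_ram_h_eps_expansion by blast
  define Wt where "Wt = map_poly (fps_ram e) w"
  have "Wt * (\<Sum>i<n. smult (ch i) (eps n a i))
      = map_poly (fps_ram e) q * (\<Prod>i<n. [:- a i, 1:]) + map_poly (fps_ram e) r"
    using arg_cong[OF assms(2), of "map_poly (fps_ram e)"]
    unfolding ram.map_poly_mult ram.map_poly_add map_fps_ram_f ch(2) Wt_def .
  moreover have "degree (map_poly (fps_ram e) r) < n"
    using map_poly_degree_leq[of "fps_ram e" r] assms(3) by linarith
  ultimately have expansion:
    "map_poly (fps_ram e) r = (\<Sum>i<n. smult (ch i * poly Wt (a i)) (eps n a i))"
    by (rule remainder_eps_sum[OF roots_inj])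
  have val: "fls_val_ge (ch i * poly Wt (a i)) (int W + int m + 1)" if "i < n" for i
    using fls_val_ge_mult[OF ch(1)[OF that]
        fls_val_ge_poly_fps_ram[OF e_pos assms(1) roots_val_ge[OF that]]]
    unfolding Wt_def by (simp add: algebra_simps)
  show ?thesis using val expansion by (rule that)
qed

lemma tangent_and_remainder_val_ge:
  fixes w q r :: "complex fps poly"
  assumes "weight_ge e m w W" "w * h = q * f + r" "degree r < n"
  defines "lam \<equiv> fps_const (1 / of_nat n) * coeff r (n - 1)"
  shows "ereal (real_of_int (int W + int m + 1) / real e) \<le> nu_fps lam"
    and "ereal (real_of_int (int W + int m + 1) / real e)
           \<le> val n e a (fls_poly (r - smult lam (pderiv f)))"
proof -
  interpret ram: idom_hom "fps_ram e" by (rule idom_hom_fps_ram[OF e_pos])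
  obtain c where c: "\<And>i. i < n \<Longrightarrow> fls_val_ge (c i) (int W + int m + 1)"
    "map_poly (fps_ram e) r = (\<Sum>i<n. smult (c i) (eps n a i))"
    using remainder_eps_expansion[OF assms(1-3)] by blast
  define Lam where "Lam = fps_ram e lam"
  have "coeff (map_poly (fps_ram e) r) (n - 1) = (\<Sum>i<n. c i)"
    unfolding c(2) coeff_sum coeff_smult by (intro sum.cong refl) (simp add: coeff_eps_top[unfolded One_nat_def])
  then have "Lam = fls_const (1 / of_nat n) * (\<Sum>i<n. c i)"
    unfolding Lam_def lam_def using e_pos by (simp add: coeff_map_poly)
  moreover have "fls_val_ge (fls_const (1 / of_nat n) * (\<Sum>i<n. c i)) (int W + int m + 1)"
    using c(1) by (intro fls_val_ge_const_mult fls_val_ge_sum) auto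
  ultimately have Lam_val: "fls_val_ge Lam (int W + int m + 1)" by simp
  then show "ereal (real_of_int (int W + int m + 1) / real e) \<le> nu_fps lam"
    unfolding Lam_def using e_pos by (rule nu_fps_ge)
  have "emb_fls_poly e (fls_poly (r - smult lam (pderiv f))) = (\<Sum>i<n. smult (c i - Lam) (eps n a i))"
    unfolding emb_fls_poly_fls_poly[OF e_pos] ram.map_poly_diff ram.map_poly_smult ram.map_poly_pderiv
      map_fps_ram_f c(2) pderiv_prod_linear Lam_def
    by (simp add: smult_sum_right smult_diff_left sum_subtractf)
  then show "ereal (real_of_int (int W + int m + 1) / real e)
      \<le> val n e a (fls_poly (r - smult lam (pderiv f)))"
    by (rule val_ge_eps_sum[OF e_pos roots_inj]) (use c(1) Lam_val in \<open>blast intro: fls_val_ge_diff\<close>)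
qed

lemma rho_quotient_ge:
  fixes w q r :: "complex fps poly"
  assumes "w * h = q * f + r" "degree r < n"
  shows "rho n (delta n e a) w + rho n (delta n e a) h - 1 \<le> rho n (delta n e a) q"
proof (cases "q = 0")
  case False
  have pos: "n > 0" "m > 0" "e > 0" using n_ge_2 m_pos e_pos by auto
  obtain k l where kl: "coeff q l $ k \<noteq> 0" "weight_ge e m q (e * k + l * m)"
    "\<And>k' l'. coeff q l' $ k' \<noteq> 0 \<Longrightarrow> e * k' + l' * m = e * k + l * m \<Longrightarrow> l' \<le> l"
    by (rule extremal_monomial[OF False, of e m]) blast+
  define v where "v = real (e * k + l * m) / real (n * m)"
  have rho_q: "rho n (delta n e a) q = ereal v"
    unfolding rho_delta v_def
    by (rule antisym[OF rho_le_monomial[OF pos kl(1)] rho_ge_weight[OF pos kl(2)]])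
  have "coeff (q * f) (l + n) $ k = coeff q l $ k"
    by (rule coeff_mult_extremal[OF pos(3) _ _ weight_f kl(2,3)]) (simp_all add: degree_f coeff_f_top)
  moreover have "coeff r (l + n) = 0" using assms(2) by (simp add: coeff_eq_0)
  ultimately have "coeff (w * h) (l + n) $ k \<noteq> 0" using kl(1) assms(1) by simp
  then have "rho n (delta n e a) (w * h) \<le> ereal (real (e * k + (l + n) * m) / real (n * m))"
    unfolding rho_delta by (rule rho_le_monomial[OF pos])
  also have "real (e * k + (l + n) * m) / real (n * m) = v + 1"
    using pos by (simp add: v_def field_simps)
  finally have "rho n (delta n e a) w + rho n (delta n e a) h \<le> ereal (v + 1)"
    by (rule order_trans[OF rho_mult_ge])
  then show ?thesis unfolding rho_q using ereal_minus_le[of 1] by (simp add: one_ereal_def)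
qed (simp add: rho_0)

lemma target_lt:
  assumes "rho n (delta n e a) w = ereal (real W / real (n * m))"
  shows "ereal (real n * delta n e a) * rho n (delta n e a) w + ereal (delta n e a)
      < ereal (real_of_int (int W + int m + 1) / real e)"
proof -
  have "ereal (real n * delta n e a) * rho n (delta n e a) w + ereal (delta n e a)
      = ereal ((real W + real m) / real e)"
    unfolding assms using n_ge_2 m_pos e_pos by (simp add: delta_eq field_simps)
  also have "\<dots> < ereal (real_of_int (int W + int m + 1) / real e)"
    using e_pos by (simp add: divide_strict_right_mono)
  finally show ?thesis .
qed

lemma rho_lt_add_rho_h_minus_1:
  assumes "rho n (delta n e a) w = ereal x"
  shows "rho n (delta n e a) w < rho n (delta n e a) w + rho n (delta n e a) h - 1"
proof (cases "rho n (delta n e a) h")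
  case (real y)
  have "1 < 1 + 1 / real (n * m)" using n_ge_2 m_pos by simp
  also have "\<dots> \<le> y" using rho_h_ge real by simp
  finally have "1 < y" .
  then show ?thesis using assms real by (simp add: one_ereal_def)
qed (use rho_h_ge assms in auto)

end

theorem mainTheorem18:
  fixes f w :: "complex fps poly" and n e :: nat and a :: "nat \<Rightarrow> complex fls"
  assumes n2: "n \<ge> 2"
    and f_conv: "conv_poly f"
    and f_deg: "degree f = n"
    and f_monic: "lead_coeff f = 1"
    and f_dist: "map_poly (\<lambda>c. c $ 0) f = monom 1 n"
    and f_red: "squarefree f"
    and e_pos: "e \<ge> 1"
    and f_fact: "emb_fls_poly e (fls_poly f) = (\<Prod>i<n. [:- a i, 1:])"
    and a_dist: "inj_on a {..<n}"
    and a_sum: "(\<Sum>i<n. a i) = 0"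
    and w_conv: "conv_poly w"
    and w_nz: "w \<noteq> 0"
  shows "\<exists>w2 lam wt.
     conv_poly w2 \<and> conv_fps lam \<and> degree wt < n - 1 \<and>
     fls_poly (w * hpoly n (delta n e a) f)
       = fls_poly (w2 * f) + smult (fps_to_fls lam) (fls_poly (pderiv f)) + wt \<and>
     nu_fps lam > ereal (real n * delta n e a) * rho n (delta n e a) w + ereal (delta n e a) \<and>
     rho n (delta n e a) w2 \<ge> rho n (delta n e a) w + rho n (delta n e a) (hpoly n (delta n e a) f) - 1 \<and>
     rho n (delta n e a) w + rho n (delta n e a) (hpoly n (delta n e a) f) - 1 > rho n (delta n e a) w \<and>
     val n e a wt > ereal (real n * delta n e a) * rho n (delta n e a) w + ereal (delta n e a)"
proof -
  interpret distinguished_roots f n e a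
    using n2 f_deg f_monic f_dist e_pos f_fact a_dist by unfold_locales
  obtain m where m: "m \<ge> 1" "\<And>i. i < n \<Longrightarrow> fls_val_ge (a i) (int m)"
    "delta n e a = real m / real e"
    using obtain_root_order by blast
  interpret distinguished_weights f n e a m
    using m by unfold_locales
  have "\<exists>q r. conv_poly q \<and> conv_poly r \<and> w * h = q * f + r \<and> degree r < n"
    using n2 f_conv f_monic f_deg w_conv by (intro conv_poly_division conv_poly_mult conv_poly_hpoly) auto
  then obtain q r where qr: "conv_poly q" "conv_poly r" "w * h = q * f + r" "degree r < n"
    by blast
  obtain W where W: "weight_ge e m w W" "rho n (delta n e a) w = ereal (real W / real (n * m))"
    using rho_eq_weight[of n m e w] w_nz n2 m_pos e_pos unfolding rho_delta by auto
  define lam where "lam = fps_const (1 / of_nat n) * coeff r (n - 1)"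
  note split = remainder_tangent_split[OF f_deg f_monic n2 qr(4,3), folded lam_def]
  note val_ge = tangent_and_remainder_val_ge[OF W(1) qr(3,4), folded lam_def]
  show ?thesis
  proof (intro exI[of _ q] exI[of _ lam] exI[of _ "fls_poly (r - smult lam (pderiv f))"] conjI)
    show "conv_poly q" "conv_fps lam"
      using qr(1,2) by (auto simp: lam_def conv_poly_def intro: conv_fps_mult)
    show "rho n (delta n e a) q \<ge> rho n (delta n e a) w + rho n (delta n e a) h - 1"
      using qr(3,4) by (rule rho_quotient_ge)
    show "rho n (delta n e a) w + rho n (delta n e a) h - 1 > rho n (delta n e a) w"
      using W(2) by (rule rho_lt_add_rho_h_minus_1)
    show "nu_fps lam > ereal (real n * delta n e a) * rho n (delta n e a) w + ereal (delta n e a)"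
      using target_lt[OF W(2)] val_ge(1) by simp
  qed (use split target_lt[OF W(2)] val_ge(2) in simp_all)
qed

end
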